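(* Let $q$ be a prime power, $G=\mathrm{PGL}_3(q)$ acting on the point set $\mathcal{P}$ of $\mathrm{PG}_2(q)$, and let $A$ be the $\{0,1\}$-matrix with rows indexed by $G$ and columns indexed by ordered pairs $(\alpha,\beta)\in\mathcal{P}^2$, with $A_{g,(\alpha,\beta)}=1$ iff $\alpha^g=\beta$. Then $A$ has rank $(|\mathcal{P}|-1)^2+1$. Moreover, for any fixed $\bar\alpha\in\mathcal{P}$, the right kernel of $A$ (viewed as a linear map $V\to\mathbb{C}^G$) equals the subspace $$\langle e^1_{\bar\alpha}-e^1_\alpha,\ e^2_{\bar\alpha}-e^2_\alpha \mid \alpha\in\mathcal{P}\rangle$$ of $V$.
   Context: Points of $\mathrm{PG}_2(q)$ are the $1$-dimensional subspaces of $\mathrm{GF}(q)^3$, so $|\mathcal{P}|=q^2+q+1$. $V$ is the complex vector space with basis $\{e_{\alpha\beta}:(\alpha,\beta)\in\mathcal{P}^2\}$, identified with the column index set of $A$. For $\alpha\in\mathcal{P}$: $e^1_\alpha=\sum_{\beta\in\mathcal{P}}e_{\alpha\beta}$ and $e^2_\alpha=\sum_{\beta\in\mathcal{P}}e_{\beta\alpha}$. *)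

theory Defs
  imports "HOL-Analysis.Analysis" "HOL-Library.Function_Algebras"
begin

definition pg_lines :: "('a::field ^ 3) set set" where
  "pg_lines = {L. \<exists>v. v \<noteq> 0 \<and> L = {c *s v | c. True}}"

typedef (overloaded) ('a::field) ppoint = "pg_lines :: ('a ^ 3) set set"
proof
  show "{c *s (axis 1 (1::'a)) | c. True} \<in> pg_lines"
    unfolding pg_lines_def by (rule CollectI, rule exI[of _ "axis 1 1"]) (simp add: axis_eq_0_iff)
qed

instance ppoint :: ("{finite,field}") finite
proof
  have "finite (pg_lines :: ('a ^ 3) set set)" by (rule finite_subset[of _ UNIV]) simp_all
  then show "finite (UNIV :: 'a ppoint set)"
    by (subst type_definition.univ[OF type_definition_ppoint]) (rule finite_imageI)
qed

definition PGL3 :: "('a::field ^ 3 ^ 3) set set" where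
  "PGL3 = {M. invertible M} // {(M, N). invertible M \<and> invertible N \<and>
              (\<exists>c. c \<noteq> 0 \<and> N = (\<chi> i j. c * M $ i $ j))}"

text \<open>Right action of an invertible matrix on points (row vectors), and of a PGL class
  (via any representative; the result does not depend on the choice).\<close>

definition act_mat :: "'a::field ^ 3 ^ 3 \<Rightarrow> 'a ppoint \<Rightarrow> 'a ppoint" where
  "act_mat M \<alpha> = Abs_ppoint ((\<lambda>v. v v* M) ` Rep_ppoint \<alpha>)"

definition act :: "('a::field ^ 3 ^ 3) set \<Rightarrow> 'a ppoint \<Rightarrow> 'a ppoint" where
  "act g \<alpha> = act_mat (SOME M. M \<in> g) \<alpha>"

definition Amat :: "('a::field ^ 3 ^ 3) set \<Rightarrow> 'a ppoint \<times> 'a ppoint \<Rightarrow> complex" where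
  "Amat g p = (if act g (fst p) = snd p then 1 else 0)"

text \<open>V = functions on pairs of points (basis e_{\<alpha>\<beta>} = indicator of (\<alpha>,\<beta>)), as a complex vector space.\<close>

abbreviation fscale :: "complex \<Rightarrow> ('b \<Rightarrow> complex) \<Rightarrow> ('b \<Rightarrow> complex)" where
  "fscale c f \<equiv> (\<lambda>x. c * f x)"

abbreviation cspanV :: "(('b \<Rightarrow> complex)) set \<Rightarrow> ('b \<Rightarrow> complex) set" where
  "cspanV \<equiv> Modules.module.span fscale"

abbreviation cdimV :: "(('b \<Rightarrow> complex)) set \<Rightarrow> nat" where
  "cdimV \<equiv> Vector_Spaces.vector_space.dim fscale"

definition A_rank :: "'a::{finite,field} itself \<Rightarrow> nat" where
  "A_rank _ = cdimV {Amat g | g :: ('a ^ 3 ^ 3) set. g \<in> PGL3}"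

definition A_kernel :: "'a::{finite,field} itself \<Rightarrow> ('a ppoint \<times> 'a ppoint \<Rightarrow> complex) set" where
  "A_kernel _ = {x. \<forall>g\<in>(PGL3 :: ('a ^ 3 ^ 3) set set). (\<Sum>p\<in>UNIV. Amat g p * x p) = 0}"

definition e1 :: "'a::field ppoint \<Rightarrow> ('a ppoint \<times> 'a ppoint \<Rightarrow> complex)" where
  "e1 \<alpha> = (\<lambda>(\<gamma>, \<delta>). if \<gamma> = \<alpha> then 1 else 0)"

definition e2 :: "'a::field ppoint \<Rightarrow> ('a ppoint \<times> 'a ppoint \<Rightarrow> complex)" where
  "e2 \<alpha> = (\<lambda>(\<gamma>, \<delta>). if \<delta> = \<alpha> then 1 else 0)"

end

theory Submission
  imports Defs
begin

(* Each row A_g is the permutation matrix of the bijection alpha |-> alpha^g, so every row has unit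
   row and column sums.  Fixing a point z, a matrix with unit line sums is one fixed such matrix plus
   a combination of the linearly independent tensors (e_a - e_z) (x) (e_b - e_z), a, b ~= z; hence the
   row space has dimension (n - 1)^2 + 1 as soon as it contains all these tensors.  It does, because
   PGL_3 is 2-transitive on points: the number of g with alpha^g = beta and gamma^g = delta depends only
   on whether alpha = gamma and whether beta = delta, so a suitable alternating sum of rows is a
   nonzero multiple of each tensor.  Dually, a kernel vector x is orthogonal to all tensors, so
   x(a, b) = u(a) + v(b); orthogonality to the identity row forces sum u + sum v = 0, and such x are
   exactly the combinations of the differences e^1_z - e^1_alpha and e^2_z - e^2_alpha. *)

section \<open>Points of the projective plane and the action of matrices\<close>

definition line_of :: "'a::field ^ 3 \<Rightarrow> ('a ^ 3) set" where
  "line_of v = {c *s v | c. True}"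

definition ppoint_of :: "'a::field ^ 3 \<Rightarrow> 'a ppoint" where
  "ppoint_of v = Abs_ppoint (line_of v)"

definition ppoint_vec :: "'a::field ppoint \<Rightarrow> 'a ^ 3" where
  "ppoint_vec \<alpha> = (SOME v. v \<noteq> 0 \<and> Rep_ppoint \<alpha> = line_of v)"

lemma line_of_in_pg_lines: "v \<noteq> 0 \<Longrightarrow> line_of v \<in> pg_lines"
  unfolding pg_lines_def line_of_def by auto

lemma ppoint_vec: "ppoint_vec \<alpha> \<noteq> 0 \<and> Rep_ppoint \<alpha> = line_of (ppoint_vec \<alpha>)"
proof -
  obtain v where "v \<noteq> 0" "Rep_ppoint \<alpha> = line_of v"
    using Rep_ppoint[of \<alpha>] unfolding pg_lines_def line_of_def by auto
  then show ?thesis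
    unfolding ppoint_vec_def by (rule someI[where P="\<lambda>v. v \<noteq> 0 \<and> Rep_ppoint \<alpha> = line_of v", OF conjI])
qed

lemma ppoint_vec_nonzero: "ppoint_vec \<alpha> \<noteq> 0"
  using ppoint_vec by blast

lemma ppoint_of_ppoint_vec [simp]: "ppoint_of (ppoint_vec \<alpha>) = \<alpha>"
  unfolding ppoint_of_def using ppoint_vec[of \<alpha>] by (metis Rep_ppoint_inverse)

lemma Rep_ppoint_of: "v \<noteq> 0 \<Longrightarrow> Rep_ppoint (ppoint_of v) = line_of v"
  unfolding ppoint_of_def by (simp add: Abs_ppoint_inverse line_of_in_pg_lines)

lemma line_of_eq_iff:
  fixes u v :: "'a::field ^ 3"
  assumes "u \<noteq> 0" "v \<noteq> 0"
  shows "line_of u = line_of v \<longleftrightarrow> (\<exists>k. u = k *s v)"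
proof
  assume "line_of u = line_of v"
  moreover have "u \<in> line_of u" unfolding line_of_def by (auto intro: exI[of _ 1])
  ultimately show "\<exists>k. u = k *s v" unfolding line_of_def by auto
next
  assume "\<exists>k. u = k *s v"
  then obtain k where k: "u = k *s v" by blast
  with assms have "k \<noteq> 0" by auto
  show "line_of u = line_of v"
  proof
    show "line_of u \<subseteq> line_of v" unfolding line_of_def k by auto
    have "c *s v = (c / k) *s u" for c
      using k \<open>k \<noteq> 0\<close> by simp
    then show "line_of v \<subseteq> line_of u" unfolding line_of_def by auto
  qed
qed

lemma ppoint_of_eq_iff:
  fixes u v :: "'a::field ^ 3"
  assumes "u \<noteq> 0" "v \<noteq> 0"
  shows "ppoint_of u = ppoint_of v \<longleftrightarrow> (\<exists>k. u = k *s v)"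
  using line_of_eq_iff[OF assms] assms
  by (simp add: ppoint_of_def Abs_ppoint_inject line_of_in_pg_lines)

lemma ppoint_of_axis_neq: "ppoint_of (axis 1 1) \<noteq> (ppoint_of (axis 2 1) :: 'a::field ppoint)"
proof
  assume "ppoint_of (axis 1 1) = (ppoint_of (axis 2 1) :: 'a ppoint)"
  then obtain k where "axis (1::3) (1::'a) = k *s axis 2 1"
    by (subst (asm) ppoint_of_eq_iff) auto
  then have "axis (1::3) (1::'a) $ 1 = (k *s axis (2::3) 1) $ 1" by (rule arg_cong)
  then show False by (simp add: axis_def)
qed

lemma exists_other_ppoint: "\<exists>\<beta>. \<beta> \<noteq> (\<alpha> :: 'a::field ppoint)"
  using ppoint_of_axis_neq by metis

lemma vector_matrix_mult_nonzero:
  fixes M :: "'a::field ^ 'n ^ 'n"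
  assumes "invertible M" "v \<noteq> 0"
  shows "v v* M \<noteq> 0"
proof
  assume "v v* M = 0"
  obtain M' where "M ** M' = mat 1" using assms(1) unfolding invertible_def by blast
  then have "v = (v v* M) v* M'" by (simp add: vector_matrix_mul_assoc)
  with \<open>v v* M = 0\<close> assms(2) show False by simp
qed

lemma act_mat_ppoint_of:
  fixes M :: "'a::field ^ 3 ^ 3"
  assumes "invertible M" "v \<noteq> 0"
  shows "act_mat M (ppoint_of v) = ppoint_of (v v* M)"
proof -
  have "(\<lambda>w. w v* M) ` line_of v = line_of (v v* M)"
    unfolding line_of_def by (auto simp: scalar_vector_matrix_assoc intro!: rev_image_eqI)
  then show ?thesis
    unfolding act_mat_def Rep_ppoint_of[OF assms(2)] by (simp add: ppoint_of_def)
qed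

lemma act_mat_eq:
  fixes M :: "'a::field ^ 3 ^ 3"
  assumes "invertible M"
  shows "act_mat M \<alpha> = ppoint_of (ppoint_vec \<alpha> v* M)"
  using act_mat_ppoint_of[OF assms ppoint_vec_nonzero, of \<alpha>] by simp

lemma act_mat_mult:
  fixes M N :: "'a::field ^ 3 ^ 3"
  assumes "invertible M" "invertible N"
  shows "act_mat (M ** N) \<alpha> = act_mat N (act_mat M \<alpha>)"
  using act_mat_ppoint_of[OF assms(2) vector_matrix_mult_nonzero[OF assms(1) ppoint_vec_nonzero]]
  by (simp add: act_mat_eq assms invertible_mult vector_matrix_mul_assoc)

lemma act_mat_inverse:
  fixes M M' :: "'a::field ^ 3 ^ 3"
  assumes "M ** M' = mat 1"
  shows "act_mat M' (act_mat M \<alpha>) = \<alpha>"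
proof -
  have "invertible M" "invertible M'"
    using assms invertible_left_inverse invertible_right_inverse by blast+
  then show ?thesis
    using act_mat_mult[of M M' \<alpha>] act_mat_eq[of "mat 1" \<alpha>] assms by (simp add: invertible_det_nz)
qed

lemma bij_act_mat:
  fixes M :: "'a::field ^ 3 ^ 3"
  assumes "invertible M"
  shows "bij (act_mat M)"
proof -
  obtain M' where "M ** M' = mat 1" "M' ** M = mat 1" using assms invertible_def by blast
  then show ?thesis using act_mat_inverse by (metis bij_betw_byWitness subset_UNIV)
qed

definition scale_mat :: "'a::field \<Rightarrow> 'a ^ 3 ^ 3 \<Rightarrow> 'a ^ 3 ^ 3" where
  "scale_mat c M = (\<chi> i j. c * M $ i $ j)"

lemma vector_matrix_mult_scale_mat: "v v* scale_mat c M = c *s (v v* M)"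
  by (simp add: scale_mat_def vector_matrix_mult_def vec_eq_iff sum_distrib_left mult_ac)

lemma scale_mat_mult_left: "scale_mat c A ** B = scale_mat c (A ** B)"
  by (simp add: scale_mat_def matrix_matrix_mult_def vec_eq_iff sum_distrib_left mult_ac)

lemma scale_mat_mult_right: "A ** scale_mat c B = scale_mat c (A ** B)"
  by (simp add: scale_mat_def matrix_matrix_mult_def vec_eq_iff sum_distrib_left mult_ac)

lemma scale_mat_scale_mat: "scale_mat c (scale_mat d A) = scale_mat (c * d) A"
  by (simp add: scale_mat_def vec_eq_iff mult_ac)

lemma scale_mat_1 [simp]: "scale_mat 1 A = A"
  by (simp add: scale_mat_def vec_eq_iff)

lemma invertible_scale_mat:
  assumes "invertible M" "c \<noteq> 0"
  shows "invertible (scale_mat c M)"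
proof -
  obtain M' where "M ** M' = mat 1" using assms(1) invertible_right_inverse by blast
  then have "scale_mat c M ** scale_mat (inverse c) M' = mat 1"
    using assms(2) by (simp add: scale_mat_mult_left scale_mat_mult_right scale_mat_scale_mat)
  then show ?thesis using invertible_right_inverse by blast
qed

lemma act_mat_scale_mat:
  fixes M :: "'a::field ^ 3 ^ 3"
  assumes "invertible M" "c \<noteq> 0"
  shows "act_mat (scale_mat c M) = act_mat M"
proof
  fix \<alpha>
  have "ppoint_of (c *s (ppoint_vec \<alpha> v* M)) = ppoint_of (ppoint_vec \<alpha> v* M)"
    using vector_matrix_mult_nonzero[OF assms(1) ppoint_vec_nonzero, of \<alpha>] assms(2)
    by (subst ppoint_of_eq_iff) auto
  then show "act_mat (scale_mat c M) \<alpha> = act_mat M \<alpha>"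
    by (simp add: act_mat_eq assms invertible_scale_mat vector_matrix_mult_scale_mat)
qed

definition pgl_class :: "'a::field ^ 3 ^ 3 \<Rightarrow> ('a ^ 3 ^ 3) set" where
  "pgl_class M = {N. invertible N \<and> (\<exists>c. c \<noteq> 0 \<and> N = scale_mat c M)}"

definition pgl_rep :: "('a::field ^ 3 ^ 3) set \<Rightarrow> 'a ^ 3 ^ 3" where
  "pgl_rep g = (SOME M. M \<in> g)"

lemma PGL3_iff: "g \<in> PGL3 \<longleftrightarrow> (\<exists>M. invertible M \<and> g = pgl_class M)"
  unfolding PGL3_def quotient_def pgl_class_def scale_mat_def by (auto simp: Image_def)

lemma pgl_class_scale_mat:
  assumes "invertible M" "c \<noteq> 0"
  shows "pgl_class (scale_mat c M) = pgl_class M"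
proof -
  have "\<exists>e. e \<noteq> 0 \<and> scale_mat d (scale_mat c M) = scale_mat e M" if "d \<noteq> 0" for d
    using that assms(2) by (intro exI[of _ "d * c"]) (simp add: scale_mat_scale_mat)
  moreover have "\<exists>e. e \<noteq> 0 \<and> scale_mat d M = scale_mat e (scale_mat c M)" if "d \<noteq> 0" for d
    using that assms(2) by (intro exI[of _ "d / c"]) (simp add: scale_mat_scale_mat)
  ultimately show ?thesis unfolding pgl_class_def by blast
qed

lemma pgl_rep_in_pgl_class:
  assumes "invertible M"
  obtains c where "c \<noteq> 0" "pgl_rep (pgl_class M) = scale_mat c M"
proof -
  have "M \<in> pgl_class M" using assms unfolding pgl_class_def by (auto intro: exI[of _ 1])
  then have "pgl_rep (pgl_class M) \<in> pgl_class M" unfolding pgl_rep_def by (rule someI)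
  then show ?thesis using that unfolding pgl_class_def by blast
qed

lemma PGL3_rep:
  assumes "g \<in> PGL3"
  shows "invertible (pgl_rep g)" "pgl_class (pgl_rep g) = g"
proof -
  obtain M where M: "invertible M" "g = pgl_class M" using assms PGL3_iff by blast
  then obtain c where c: "c \<noteq> 0" "pgl_rep g = scale_mat c M" using pgl_rep_in_pgl_class by metis
  show "invertible (pgl_rep g)" using c M(1) invertible_scale_mat by simp
  show "pgl_class (pgl_rep g) = g" using c M pgl_class_scale_mat by simp
qed

lemma act_eq_act_mat_pgl_rep: "act g = act_mat (pgl_rep g)"
  unfolding act_def pgl_rep_def ..

lemma act_pgl_class:
  assumes "invertible M"
  shows "act (pgl_class M) = act_mat M"
proof -
  obtain c where "c \<noteq> 0" "pgl_rep (pgl_class M) = scale_mat c M"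
    using pgl_rep_in_pgl_class[OF assms] .
  then show ?thesis using act_mat_scale_mat[OF assms] by (simp add: act_eq_act_mat_pgl_rep)
qed

lemma bij_act:
  assumes "g \<in> PGL3"
  shows "bij (act g)"
  using bij_act_mat[OF PGL3_rep(1)[OF assms]] by (simp add: act_eq_act_mat_pgl_rep)

lemma identity_in_PGL3:
  shows "pgl_class (mat 1 :: 'a::field ^ 3 ^ 3) \<in> PGL3" and "act (pgl_class (mat 1 :: 'a ^ 3 ^ 3)) = id"
proof -
  have i: "invertible (mat 1 :: 'a ^ 3 ^ 3)" by (simp add: invertible_det_nz)
  then show "pgl_class (mat 1 :: 'a ^ 3 ^ 3) \<in> PGL3" using PGL3_iff by blast
  show "act (pgl_class (mat 1 :: 'a ^ 3 ^ 3)) = id"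
    by (simp add: act_pgl_class[OF i] act_mat_eq[OF i] fun_eq_iff)
qed

definition pgl_transport :: "'a::field ^ 3 ^ 3 \<Rightarrow> 'a ^ 3 ^ 3 \<Rightarrow> ('a ^ 3 ^ 3) set \<Rightarrow> ('a ^ 3 ^ 3) set" where
  "pgl_transport H K g = pgl_class (H ** pgl_rep g ** K)"

lemma pgl_transport:
  assumes "invertible H" "invertible K" "g \<in> PGL3"
  shows "pgl_transport H K g \<in> PGL3"
    and "act (pgl_transport H K g) = act_mat K \<circ> act g \<circ> act_mat H"
proof -
  have g: "invertible (pgl_rep g)" using PGL3_rep(1)[OF assms(3)] .
  then have i: "invertible (H ** pgl_rep g ** K)" using assms(1,2) by (simp add: invertible_mult)
  then show "pgl_transport H K g \<in> PGL3" unfolding pgl_transport_def using PGL3_iff by blast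
  have "act_mat (H ** pgl_rep g ** K) x = act_mat K (act_mat (pgl_rep g) (act_mat H x))" for x
    using act_mat_mult[OF invertible_mult[OF assms(1) g] assms(2)] act_mat_mult[OF assms(1) g] by simp
  then show "act (pgl_transport H K g) = act_mat K \<circ> act g \<circ> act_mat H"
    unfolding pgl_transport_def act_pgl_class[OF i] act_eq_act_mat_pgl_rep[of g] by (simp add: fun_eq_iff)
qed

lemma pgl_transport_inverse:
  assumes "invertible H" "invertible K" "g \<in> PGL3" "H' ** H = mat 1" "K ** K' = mat 1"
  shows "pgl_transport H' K' (pgl_transport H K g) = g"
proof -
  have "invertible (H ** pgl_rep g ** K)"
    using assms(1,2) PGL3_rep(1)[OF assms(3)] by (simp add: invertible_mult)
  then obtain c where c: "c \<noteq> 0" "pgl_rep (pgl_transport H K g) = scale_mat c (H ** pgl_rep g ** K)"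
    unfolding pgl_transport_def by (rule pgl_rep_in_pgl_class)
  have "H' ** pgl_rep (pgl_transport H K g) ** K' = scale_mat c (H' ** H ** pgl_rep g ** (K ** K'))"
    unfolding c(2) by (simp add: scale_mat_mult_left scale_mat_mult_right matrix_mul_assoc)
  also have "\<dots> = scale_mat c (pgl_rep g)" using assms(4,5) by simp
  finally show ?thesis
    unfolding pgl_transport_def[of H' K']
    using pgl_class_scale_mat[OF PGL3_rep(1)[OF assms(3)] c(1)] PGL3_rep(2)[OF assms(3)] by simp
qed

lemma card_PGL3_transport:
  fixes H K :: "'a::{finite,field} ^ 3 ^ 3"
  assumes "invertible H" "invertible K"
  shows "card {g \<in> PGL3. P (act g)} = card {g \<in> PGL3. P (act_mat K \<circ> act g \<circ> act_mat H)}"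
proof -
  obtain H' where H': "H ** H' = mat 1" "H' ** H = mat 1" using assms(1) invertible_def by blast
  obtain K' where K': "K ** K' = mat 1" "K' ** K = mat 1" using assms(2) invertible_def by blast
  have inv': "invertible H'" "invertible K'" using H' K' invertible_def by blast+
  have act_back: "act_mat K \<circ> act (pgl_transport H' K' g) \<circ> act_mat H = act g" if "g \<in> PGL3" for g
    using pgl_transport(2)[OF inv' that] act_mat_inverse[OF H'(1)] act_mat_inverse[OF K'(2)]
    by (simp add: fun_eq_iff)
  show ?thesis
  proof (rule bij_betw_same_card[of "pgl_transport H' K'"], rule bij_betw_byWitness[where f'="pgl_transport H K"])
    show "\<forall>g\<in>{g \<in> PGL3. P (act g)}. pgl_transport H K (pgl_transport H' K' g) = g"
      using pgl_transport_inverse[OF inv' _ H'(1) K'(2)] by blast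
    show "\<forall>g\<in>{g \<in> PGL3. P (act_mat K \<circ> act g \<circ> act_mat H)}. pgl_transport H' K' (pgl_transport H K g) = g"
      using pgl_transport_inverse[OF assms _ H'(2) K'(1)] by blast
    show "pgl_transport H' K' ` {g \<in> PGL3. P (act g)} \<subseteq> {g \<in> PGL3. P (act_mat K \<circ> act g \<circ> act_mat H)}"
      using act_back pgl_transport(1)[OF inv'] by auto
    show "pgl_transport H K ` {g \<in> PGL3. P (act_mat K \<circ> act g \<circ> act_mat H)} \<subseteq> {g \<in> PGL3. P (act g)}"
      using pgl_transport[OF assms] by auto
  qed
qed

section \<open>Two-transitivity and counting\<close>

lemma parallel_if_minors_vanish:
  fixes u w :: "'a::field ^ 3"
  assumes "u \<noteq> 0"
    and "u$2 * w$3 - u$3 * w$2 = 0" "u$3 * w$1 - u$1 * w$3 = 0" "u$1 * w$2 - u$2 * w$1 = 0"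
  shows "\<exists>k. w = k *s u"
proof -
  obtain i where i: "u $ i \<noteq> 0" using assms(1) by (auto simp: vec_eq_iff)
  have cross: "\<forall>i j. w$j * u$i = w$i * u$j"
    unfolding forall_3 using assms(2-4) by (simp add: algebra_simps)
  have "w $ j = (w$i / u$i) * u $ j" for j
  proof -
    have "w$j * u$i = w$i * u$j" using cross by blast
    then have "w$j = w$i * u$j / u$i" using i by (simp add: eq_divide_eq)
    then show ?thesis by simp
  qed
  then have "w = (w$i / u$i) *s u"
    unfolding vec_eq_iff vector_smult_component by blast
  then show ?thesis by blast
qed

lemma axis_vector_matrix_mult: "axis i (1::'a::field) v* M = M $ i"
  by (simp add: vector_matrix_mult_def axis_def vec_eq_iff if_distrib if_distribR cong: if_cong)

lemma act_mat_from_axes: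
  fixes \<alpha> \<gamma> :: "'a::field ppoint"
  assumes "\<alpha> \<noteq> \<gamma>"
  shows "\<exists>M. invertible M \<and> act_mat M (ppoint_of (axis 1 1)) = \<alpha> \<and> act_mat M (ppoint_of (axis 2 1)) = \<gamma>"
proof -
  define u where "u = ppoint_vec \<alpha>"
  define w where "w = ppoint_vec \<gamma>"
  have u0: "u \<noteq> 0" and w0: "w \<noteq> 0" using ppoint_vec_nonzero u_def w_def by auto
  have independent: "\<not> (\<exists>k. w = k *s u)"
  proof
    assume "\<exists>k. w = k *s u"
    then have "ppoint_of w = ppoint_of u" using ppoint_of_eq_iff[OF w0 u0] by simp
    then show False using assms u_def w_def by simp
  qed
  have "\<exists>z. det (vector [u, w, z] :: 'a ^ 3 ^ 3) \<noteq> 0"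
  proof (rule ccontr)
    assume "\<not> ?thesis"
    then have "det (vector [u, w, axis 1 1] :: 'a ^ 3 ^ 3) = 0" "det (vector [u, w, axis 2 1] :: 'a ^ 3 ^ 3) = 0"
      "det (vector [u, w, axis 3 1] :: 'a ^ 3 ^ 3) = 0"
      by auto
    then have "u$2 * w$3 - u$3 * w$2 = 0" "u$3 * w$1 - u$1 * w$3 = 0" "u$1 * w$2 - u$2 * w$1 = 0"
      by (simp_all add: det_3 axis_def algebra_simps)
    then show False using parallel_if_minors_vanish[OF u0] independent by blast
  qed
  then obtain z where "det (vector [u, w, z] :: 'a ^ 3 ^ 3) \<noteq> 0" by blast
  then have inv: "invertible (vector [u, w, z] :: 'a ^ 3 ^ 3)" using invertible_det_nz by blast
  show ?thesis
    apply (rule exI[of _ "vector [u, w, z]"])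
    using inv act_mat_ppoint_of[OF inv, of "axis 1 1"] act_mat_ppoint_of[OF inv, of "axis 2 1"]
    by (simp add: axis_vector_matrix_mult u_def w_def)
qed

lemma act_mat_two_transitive:
  fixes \<alpha> \<beta> \<gamma> \<delta> :: "'a::field ppoint"
  assumes "\<alpha> \<noteq> \<gamma>" "\<beta> \<noteq> \<delta>"
  shows "\<exists>M. invertible M \<and> act_mat M \<alpha> = \<beta> \<and> act_mat M \<gamma> = \<delta>"
proof -
  obtain M1 where M1: "invertible M1" "act_mat M1 (ppoint_of (axis 1 1)) = \<alpha>" "act_mat M1 (ppoint_of (axis 2 1)) = \<gamma>"
    using act_mat_from_axes[OF assms(1)] by blast
  obtain M2 where M2: "invertible M2" "act_mat M2 (ppoint_of (axis 1 1)) = \<beta>" "act_mat M2 (ppoint_of (axis 2 1)) = \<delta>"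
    using act_mat_from_axes[OF assms(2)] by blast
  obtain M1' where M1': "M1 ** M1' = mat 1" "M1' ** M1 = mat 1" using M1(1) invertible_def by blast
  have i1: "invertible M1'" using M1' invertible_def by blast
  have "act_mat (M1' ** M2) x = act_mat M2 (act_mat M1' x)" for x using act_mat_mult[OF i1 M2(1)] .
  moreover have "act_mat M1' \<alpha> = ppoint_of (axis 1 1)" "act_mat M1' \<gamma> = ppoint_of (axis 2 1)"
    using act_mat_inverse[OF M1'(1)] M1 by metis+
  ultimately show ?thesis using M2 invertible_mult[OF i1 M2(1)] by metis
qed

lemma act_mat_transitive: "\<exists>M. invertible M \<and> act_mat M \<alpha> = (\<beta> :: 'a::field ppoint)"
proof -
  obtain \<gamma> where "\<gamma> \<noteq> \<alpha>" using exists_other_ppoint by blast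
  moreover obtain \<delta> where "\<delta> \<noteq> \<beta>" using exists_other_ppoint by blast
  ultimately show ?thesis using act_mat_two_transitive[of \<alpha> \<gamma> \<beta> \<delta>] by auto
qed

lemma finite_PGL3: "finite (PGL3 :: ('a::{finite,field} ^ 3 ^ 3) set set)"
  by (rule finite_subset[of _ UNIV]) auto

definition maps_count :: "'a::{finite,field} ppoint \<Rightarrow> 'a ppoint \<Rightarrow> 'a ppoint \<Rightarrow> 'a ppoint \<Rightarrow> nat" where
  "maps_count \<alpha> \<beta> \<gamma> \<delta> = card {g \<in> (PGL3 :: ('a ^ 3 ^ 3) set set). act g \<alpha> = \<beta> \<and> act g \<gamma> = \<delta>}"

lemma maps_count_transport:
  fixes H K :: "'a::{finite,field} ^ 3 ^ 3"
  assumes "invertible H" "invertible K"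
  shows "maps_count (act_mat H \<alpha>) \<beta> (act_mat H \<gamma>) \<delta> = maps_count \<alpha> (act_mat K \<beta>) \<gamma> (act_mat K \<delta>)"
proof -
  have "inj (act_mat K)" using bij_act_mat[OF assms(2)] bij_is_inj by blast
  then have "{g \<in> (PGL3 :: ('a ^ 3 ^ 3) set set). act g (act_mat H \<alpha>) = \<beta> \<and> act g (act_mat H \<gamma>) = \<delta>}
    = {g \<in> PGL3. (\<lambda>f. f \<alpha> = act_mat K \<beta> \<and> f \<gamma> = act_mat K \<delta>) (act_mat K \<circ> act g \<circ> act_mat H)}"
    by (simp add: inj_eq)
  then show ?thesis
    unfolding maps_count_def using card_PGL3_transport[OF assms, where P="\<lambda>f. f \<alpha> = act_mat K \<beta> \<and> f \<gamma> = act_mat K \<delta>"]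
    by simp
qed

lemma maps_count_diagonal:
  fixes \<alpha> \<beta> \<gamma> :: "'a::{finite,field} ppoint"
  shows "maps_count \<alpha> \<beta> \<alpha> \<beta> = maps_count \<gamma> \<gamma> \<gamma> \<gamma>"
proof -
  obtain H :: "'a ^ 3 ^ 3" where H: "invertible H" "act_mat H \<gamma> = \<alpha>" using act_mat_transitive by blast
  obtain K :: "'a ^ 3 ^ 3" where K: "invertible K" "act_mat K \<beta> = \<gamma>" using act_mat_transitive by blast
  show ?thesis using maps_count_transport[OF H(1) K(1), of \<gamma> \<beta> \<gamma> \<beta>] H(2) K(2) by simp
qed

lemma maps_count_off_diagonal:
  fixes \<alpha> \<beta> \<gamma> \<delta> \<alpha>' \<gamma>' :: "'a::{finite,field} ppoint"
  assumes "\<alpha> \<noteq> \<gamma>" "\<beta> \<noteq> \<delta>" "\<alpha>' \<noteq> \<gamma>'"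
  shows "maps_count \<alpha> \<beta> \<gamma> \<delta> = maps_count \<alpha>' \<alpha>' \<gamma>' \<gamma>'"
proof -
  obtain H :: "'a ^ 3 ^ 3" where H: "invertible H" "act_mat H \<alpha>' = \<alpha>" "act_mat H \<gamma>' = \<gamma>"
    using act_mat_two_transitive[OF assms(3,1)] by blast
  obtain K :: "'a ^ 3 ^ 3" where K: "invertible K" "act_mat K \<beta> = \<alpha>'" "act_mat K \<delta> = \<gamma>'"
    using act_mat_two_transitive[OF assms(2,3)] by blast
  show ?thesis using maps_count_transport[OF H(1) K(1), of \<alpha>' \<beta> \<gamma>' \<delta>] H(2,3) K(2,3) by simp
qed

lemma maps_count_mismatch:
  fixes \<alpha> \<beta> \<gamma> \<delta> :: "'a::{finite,field} ppoint"
  assumes "(\<alpha> = \<gamma>) \<noteq> (\<beta> = \<delta>)"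
  shows "maps_count \<alpha> \<beta> \<gamma> \<delta> = 0"
proof -
  have "{g \<in> (PGL3 :: ('a ^ 3 ^ 3) set set). act g \<alpha> = \<beta> \<and> act g \<gamma> = \<delta>} = {}"
    using assms bij_act by (auto dest: bij_is_inj injD)
  then show ?thesis unfolding maps_count_def by simp
qed

lemma maps_count_pos: "0 < maps_count \<alpha> \<alpha> \<alpha> (\<alpha> :: 'a::{finite,field} ppoint)"
  unfolding maps_count_def card_gt_0_iff using finite_PGL3 identity_in_PGL3[where 'a='a] by auto

lemma maps_count_cases:
  fixes \<alpha> \<beta> \<gamma> \<delta> z a :: "'a::{finite,field} ppoint"
  assumes "a \<noteq> z"
  shows "maps_count \<alpha> \<beta> \<gamma> \<delta> =
    (if \<alpha> = \<gamma> then (if \<beta> = \<delta> then maps_count z z z z else 0)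
     else (if \<beta> = \<delta> then 0 else maps_count z z a a))"
  using maps_count_diagonal maps_count_off_diagonal[OF _ _ assms[symmetric]]
    maps_count_mismatch[of \<alpha> \<gamma> \<beta> \<delta>]
  by auto

section \<open>Matrices with unit line sums\<close>

interpretation fun_space: vector_space "fscale :: complex \<Rightarrow> ('b \<Rightarrow> complex) \<Rightarrow> ('b \<Rightarrow> complex)"
  by unfold_locales (auto simp: fun_eq_iff algebra_simps)

lemma sum_apply: "sum f A x = (\<Sum>i\<in>A. f i x)"
  for f :: "'i \<Rightarrow> 'b \<Rightarrow> 'c::comm_monoid_add"
  by (induct A rule: infinite_finite_induct) auto

lemma sum_UNIV_pairs: "(\<Sum>p\<in>UNIV. f p) = (\<Sum>c\<in>UNIV. \<Sum>d\<in>UNIV. f (c, d))"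
  for f :: "'x::finite \<times> 'y::finite \<Rightarrow> 'c::comm_monoid_add"
  unfolding sum.cartesian_product by simp

lemma sum_indicator_diff:
  fixes h :: "'x::finite \<Rightarrow> complex"
  shows "(\<Sum>c\<in>UNIV. (of_bool (c = a) - of_bool (c = z)) * h c) = h a - h z"
  by (simp add: left_diff_distrib sum_subtractf)

lemma sum_punctured_diff:
  fixes f :: "'x::finite \<Rightarrow> complex"
  shows "(\<Sum>a\<in>-{z}. f a * (of_bool (c = a) - of_bool (c = z))) = (if c = z then f z - sum f UNIV else f c)"
proof (cases "c = z")
  case True
  then have "(\<Sum>a\<in>-{z}. f a * (of_bool (c = a) - of_bool (c = z))) = - (\<Sum>a\<in>-{z}. f a)"
    by (simp add: sum_negf)
  also have "(\<Sum>a\<in>-{z}. f a) = sum f UNIV - f z"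
    by (simp add: Compl_eq_Diff_UNIV sum_diff1)
  finally show ?thesis using True by simp
next
  case False
  then have "(\<Sum>a\<in>-{z}. f a * (of_bool (c = a) - of_bool (c = z))) = (\<Sum>a\<in>-{z}. if c = a then f c else 0)"
    by (intro sum.cong) auto
  then show ?thesis using False by simp
qed

definition diff_tensor :: "'x \<Rightarrow> 'x \<Rightarrow> 'x \<Rightarrow> ('x \<times> 'x \<Rightarrow> complex)" where
  "diff_tensor z a b = (\<lambda>(c, d). (of_bool (c = a) - of_bool (c = z)) * (of_bool (d = b) - of_bool (d = z)))"

lemma diff_tensor_off_cross:
  assumes "q \<in> (-{z}) \<times> (-{z})" "p \<in> (-{z}) \<times> (-{z})"
  shows "diff_tensor z (fst q) (snd q) p = of_bool (q = p)"
  using assms by (auto simp: diff_tensor_def prod_eq_iff split_beta)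

lemma diff_tensor_pairing:
  fixes x :: "'x::finite \<times> 'x \<Rightarrow> complex"
  shows "(\<Sum>p\<in>UNIV. diff_tensor z a b p * x p) = x (a, b) - x (a, z) - x (z, b) + x (z, z)"
proof -
  have "(\<Sum>p\<in>UNIV. diff_tensor z a b p * x p)
      = (\<Sum>c\<in>UNIV. (of_bool (c = a) - of_bool (c = z))
          * (\<Sum>d\<in>UNIV. (of_bool (d = b) - of_bool (d = z)) * x (c, d)))"
    unfolding sum_UNIV_pairs sum_distrib_left by (simp add: diff_tensor_def mult_ac)
  also have "\<dots> = x (a, b) - x (a, z) - x (z, b) + x (z, z)"
    by (simp only: sum_indicator_diff) simp
  finally show ?thesis .
qed

(* The unique matrix with unit line sums that vanishes outside row z and column z. *)
definition cross_vec :: "'x::finite \<Rightarrow> ('x \<times> 'x \<Rightarrow> complex)" where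
  "cross_vec z = (\<lambda>(c, d). if c = z \<and> d = z then 2 - of_nat (card (UNIV :: 'x set))
     else if c = z \<or> d = z then 1 else 0)"

lemma cross_vec_nonzero: "cross_vec (z :: 'x::finite) \<noteq> 0"
proof (cases "\<exists>a. a \<noteq> z")
  case True
  then obtain a where "a \<noteq> z" by blast
  then have "cross_vec z (z, a) = 1" by (simp add: cross_vec_def)
  then show ?thesis by (metis one_neq_zero zero_fun_def)
next
  case False
  then have "UNIV = {z}" by auto
  then have "card (UNIV :: 'x set) = 1" by (metis card_1_singleton_iff One_nat_def)
  then have "cross_vec z (z, z) = 1" by (simp add: cross_vec_def)
  then show ?thesis by (metis one_neq_zero zero_fun_def)
qed

lemma cross_vec_off_cross: "p \<in> (-{z}) \<times> (-{z}) \<Longrightarrow> cross_vec z p = 0"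
  by (cases p) (simp add: cross_vec_def)

lemma unit_line_sums_decomposition:
  fixes M :: "'x::finite \<times> 'x \<Rightarrow> complex"
  assumes rows: "\<And>c. (\<Sum>d\<in>UNIV. M (c, d)) = 1" and cols: "\<And>d. (\<Sum>c\<in>UNIV. M (c, d)) = 1"
  shows "M = cross_vec z + (\<Sum>q\<in>(-{z}) \<times> (-{z}). fscale (M q) (diff_tensor z (fst q) (snd q)))"
proof
  fix p :: "'x \<times> 'x"
  obtain c d where p: "p = (c, d)" by (cases p)
  define inner where "inner a = (\<Sum>b\<in>-{z}. M (a, b) * (of_bool (d = b) - of_bool (d = z)))" for a
  have inner: "inner a = (if d = z then M (a, z) - 1 else M (a, d))" for a
    unfolding inner_def sum_punctured_diff[of "\<lambda>b. M (a, b)"] using rows by simp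
  have "(\<Sum>q\<in>(-{z}) \<times> (-{z}). fscale (M q) (diff_tensor z (fst q) (snd q))) (c, d)
      = (\<Sum>q\<in>(-{z}) \<times> (-{z}). M q * diff_tensor z (fst q) (snd q) (c, d))"
    by (simp only: sum_apply)
  also have "\<dots> = (\<Sum>a\<in>-{z}. \<Sum>b\<in>-{z}.
      M (a, b) * ((of_bool (c = a) - of_bool (c = z)) * (of_bool (d = b) - of_bool (d = z))))"
    by (simp add: sum.cartesian_product split_beta diff_tensor_def)
  also have "\<dots> = (\<Sum>a\<in>-{z}. inner a * (of_bool (c = a) - of_bool (c = z)))"
    unfolding inner_def sum_distrib_right by (simp only: mult_ac)
  also have "\<dots> = (if c = z then inner z - sum inner UNIV else inner c)"
    by (rule sum_punctured_diff)
  also have "\<dots> = M (c, d) - cross_vec z (c, d)"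
    using cols[of d] cols[of z]
    by (auto simp: inner cross_vec_def sum_subtractf)
  finally show "M p = (cross_vec z + (\<Sum>q\<in>(-{z}) \<times> (-{z}). fscale (M q) (diff_tensor z (fst q) (snd q)))) p"
    unfolding p by simp
qed

lemma independent_by_witness_points:
  fixes S :: "('x \<Rightarrow> complex) set"
  assumes fin: "finite S" and b: "b \<in> S" "b \<noteq> 0"
    and witness: "\<And>v. v \<in> S \<Longrightarrow> v \<noteq> b \<Longrightarrow> \<exists>p. v p \<noteq> 0 \<and> (\<forall>w\<in>S. w \<noteq> v \<longrightarrow> w p = 0)"
  shows "fun_space.independent S"
proof
  assume "fun_space.dependent S"
  then obtain u where u: "\<exists>v\<in>S. u v \<noteq> 0" "(\<Sum>v\<in>S. fscale (u v) v) = 0"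
    using fun_space.dependent_finite[OF fin] by blast
  have combination: "(\<Sum>w\<in>S. u w * w p) = u v * v p" if "v \<in> S" "\<forall>w\<in>S. w \<noteq> v \<longrightarrow> u w * w p = 0" for v p
    using fin that by (simp add: sum.remove sum.neutral)
  have vanish: "(\<Sum>w\<in>S. u w * w p) = 0" for p
    using fun_cong[OF u(2), of p] by (simp add: sum_apply)
  have others: "u v = 0" if v: "v \<in> S" "v \<noteq> b" for v
  proof -
    obtain p where "v p \<noteq> 0" "\<forall>w\<in>S. w \<noteq> v \<longrightarrow> w p = 0" using witness[OF v] by blast
    then show ?thesis using combination[OF v(1)] vanish[of p] by simp
  qed
  obtain p where "b p \<noteq> 0" using b(2) by (auto simp: fun_eq_iff)
  then have "u b = 0" using combination[OF b(1), of p] vanish[of p] others by simp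
  then show False using u(1) others by metis
qed

definition cross_basis :: "'x::finite \<Rightarrow> ('x \<times> 'x \<Rightarrow> complex) set" where
  "cross_basis z = insert (cross_vec z) ((\<lambda>q. diff_tensor z (fst q) (snd q)) ` ((-{z}) \<times> (-{z})))"

lemma span_cross_basis:
  fixes W :: "('x::finite \<times> 'x \<Rightarrow> complex) set" and z :: 'x
  assumes "M\<^sub>0 \<in> W"
    and rows: "\<And>M c. M \<in> W \<Longrightarrow> (\<Sum>d\<in>UNIV. M (c, d)) = 1"
    and cols: "\<And>M d. M \<in> W \<Longrightarrow> (\<Sum>c\<in>UNIV. M (c, d)) = 1"
    and tensors: "\<And>a b. a \<noteq> z \<Longrightarrow> b \<noteq> z \<Longrightarrow> diff_tensor z a b \<in> cspanV W"
  shows "cspanV W = cspanV (cross_basis z)"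
proof -
  define T where "T q = diff_tensor z (fst q) (snd q)" for q
  have decomposition: "M = cross_vec z + (\<Sum>q\<in>(-{z}) \<times> (-{z}). fscale (M q) (T q))" if "M \<in> W" for M
    using unit_line_sums_decomposition[OF rows[OF that] cols[OF that]] unfolding T_def .
  have "W \<subseteq> cspanV (cross_basis z)"
  proof
    fix M assume "M \<in> W"
    have "cross_vec z \<in> cspanV (cross_basis z)"
      unfolding cross_basis_def by (simp add: fun_space.span_base)
    moreover have "T q \<in> cspanV (cross_basis z)" if "q \<in> (-{z}) \<times> (-{z})" for q
      using that unfolding cross_basis_def T_def by (simp add: fun_space.span_base)
    ultimately show "M \<in> cspanV (cross_basis z)"
      by (subst decomposition[OF \<open>M \<in> W\<close>]) (auto intro!: fun_space.span_add fun_space.span_sum fun_space.span_scale)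
  qed
  moreover have "cross_basis z \<subseteq> cspanV W"
  proof -
    have T: "T q \<in> cspanV W" if "q \<in> (-{z}) \<times> (-{z})" for q
      using that by (cases q) (simp add: T_def tensors)
    have "cross_vec z = M\<^sub>0 - (\<Sum>q\<in>(-{z}) \<times> (-{z}). fscale (M\<^sub>0 q) (T q))"
      using decomposition[OF assms(1)] by (simp add: algebra_simps)
    also have "\<dots> \<in> cspanV W"
      using fun_space.span_base[OF assms(1)] T
      by (intro fun_space.span_diff fun_space.span_sum fun_space.span_scale)
    finally show ?thesis unfolding cross_basis_def using T by (auto simp: T_def)
  qed
  ultimately show ?thesis using fun_space.span_eq by blast
qed

lemma independent_cross_basis: "fun_space.independent (cross_basis (z :: 'x::finite))"
proof (rule independent_by_witness_points)
  show "finite (cross_basis z)" by (simp add: cross_basis_def)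
  show "cross_vec z \<in> cross_basis z" "cross_vec z \<noteq> 0" by (simp_all add: cross_basis_def cross_vec_nonzero)
  fix v assume "v \<in> cross_basis z" "v \<noteq> cross_vec z"
  then obtain q where q: "q \<in> (-{z}) \<times> (-{z})" "v = diff_tensor z (fst q) (snd q)"
    unfolding cross_basis_def by blast
  show "\<exists>p. v p \<noteq> 0 \<and> (\<forall>w\<in>cross_basis z. w \<noteq> v \<longrightarrow> w p = 0)"
  proof (intro exI conjI ballI impI)
    show "v q \<noteq> 0" using diff_tensor_off_cross[OF q(1) q(1)] q(2) by simp
    fix w assume "w \<in> cross_basis z" "w \<noteq> v"
    then consider "w = cross_vec z"
      | q' where "q' \<in> (-{z}) \<times> (-{z})" "w = diff_tensor z (fst q') (snd q')" "q' \<noteq> q"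
      using q unfolding cross_basis_def by blast
    then show "w q = 0"
    proof cases
      case 1
      then show ?thesis using cross_vec_off_cross[OF q(1)] by simp
    next
      case 2
      then show ?thesis using diff_tensor_off_cross[OF 2(1) q(1)] by simp
    qed
  qed
qed

lemma card_cross_basis: "card (cross_basis (z :: 'x::finite)) = (card (UNIV :: 'x set) - 1)^2 + 1"
proof -
  define T where "T q = diff_tensor z (fst q) (snd q)" for q
  have "inj_on T ((-{z}) \<times> (-{z}))"
  proof (rule inj_onI)
    fix q q' assume "q \<in> (-{z}) \<times> (-{z})" "q' \<in> (-{z}) \<times> (-{z})" "T q = T q'"
    then have "of_bool (q' = q) = (1 :: complex)"
      using diff_tensor_off_cross[of q' z q] diff_tensor_off_cross[of q z q] unfolding T_def by simp
    then show "q = q'" by simp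
  qed
  moreover have "cross_vec z \<notin> T ` ((-{z}) \<times> (-{z}))"
  proof
    assume "cross_vec z \<in> T ` ((-{z}) \<times> (-{z}))"
    then obtain q where "q \<in> (-{z}) \<times> (-{z})" "cross_vec z = T q" by blast
    then show False
      using cross_vec_off_cross[of q z] diff_tensor_off_cross[of q z q] unfolding T_def by simp
  qed
  ultimately have "card (cross_basis z) = card ((-{z}) \<times> (-{z})) + 1"
    unfolding cross_basis_def T_def[symmetric] by (simp add: card_image)
  then show ?thesis
    by (simp add: card_cartesian_product Compl_eq_Diff_UNIV card_Diff_singleton power2_eq_square)
qed

lemma dim_unit_line_sums:
  fixes W :: "('x::finite \<times> 'x \<Rightarrow> complex) set" and z :: 'x
  assumes "M\<^sub>0 \<in> W"
    and rows: "\<And>M c. M \<in> W \<Longrightarrow> (\<Sum>d\<in>UNIV. M (c, d)) = 1"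
    and cols: "\<And>M d. M \<in> W \<Longrightarrow> (\<Sum>c\<in>UNIV. M (c, d)) = 1"
    and tensors: "\<And>a b. a \<noteq> z \<Longrightarrow> b \<noteq> z \<Longrightarrow> diff_tensor z a b \<in> cspanV W"
  shows "cdimV W = (card (UNIV :: 'x set) - 1)^2 + 1"
proof -
  have "cdimV W = cdimV (cross_basis z)"
    using fun_space.dim_span[of W] fun_space.dim_span[of "cross_basis z"] span_cross_basis[OF assms]
    by simp
  also have "\<dots> = card (cross_basis z)"
    using independent_cross_basis by (rule fun_space.dim_eq_card_independent)
  finally show ?thesis by (simp add: card_cross_basis)
qed

section \<open>Annihilators of row spaces\<close>

definition annihilator :: "('b::finite \<Rightarrow> complex) set \<Rightarrow> ('b \<Rightarrow> complex) set" where
  "annihilator W = {x. \<forall>w\<in>W. (\<Sum>p\<in>UNIV. w p * x p) = 0}"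

lemma subspace_annihilator: "fun_space.subspace (annihilator W)"
  unfolding fun_space.subspace_def
proof (intro conjI ballI allI)
  show "0 \<in> annihilator W" by (simp add: annihilator_def)
  fix x y c assume x: "x \<in> annihilator W" and y: "y \<in> annihilator W"
  have "(\<Sum>p\<in>UNIV. w p * (x + y) p) = (\<Sum>p\<in>UNIV. w p * x p) + (\<Sum>p\<in>UNIV. w p * y p)"
    "(\<Sum>p\<in>UNIV. w p * (c * x p)) = c * (\<Sum>p\<in>UNIV. w p * x p)" for w
    by (simp_all add: distrib_left sum.distrib sum_distrib_left mult_ac)
  then show "x + y \<in> annihilator W" "fscale c x \<in> annihilator W"
    using x y unfolding annihilator_def by simp_all
qed

lemma span_subset_annihilator:
  assumes "x \<in> annihilator W"
  shows "cspanV W \<subseteq> annihilator {x}"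
proof (rule fun_space.span_minimal)
  show "W \<subseteq> annihilator {x}" using assms by (auto simp: annihilator_def mult.commute)
qed (rule subspace_annihilator)

lemma fst_fun_in_span:
  fixes f :: "'a::{finite,field} ppoint \<Rightarrow> complex"
  assumes "sum f UNIV = 0"
  shows "(\<lambda>p. f (fst p)) \<in> cspanV (range (\<lambda>\<alpha>. e1 z - e1 \<alpha>))"
proof -
  have "(\<lambda>p. f (fst p)) = (\<Sum>\<alpha>\<in>UNIV. fscale (- f \<alpha>) (e1 z - e1 \<alpha>))"
  proof
    fix p :: "'a ppoint \<times> 'a ppoint"
    have "(\<Sum>\<alpha>\<in>UNIV. fscale (- f \<alpha>) (e1 z - e1 \<alpha>)) p
        = (\<Sum>\<alpha>\<in>UNIV. f \<alpha> * of_bool (fst p = \<alpha>) - of_bool (fst p = z) * f \<alpha>)"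
      unfolding sum_apply by (intro sum.cong refl) (simp add: e1_def split_beta algebra_simps)
    also have "\<dots> = (\<Sum>\<alpha>\<in>UNIV. f \<alpha> * of_bool (fst p = \<alpha>)) - of_bool (fst p = z) * sum f UNIV"
      by (simp only: sum_subtractf sum_distrib_left)
    also have "\<dots> = f (fst p)"
      using assms by simp
    finally show "f (fst p) = (\<Sum>\<alpha>\<in>UNIV. fscale (- f \<alpha>) (e1 z - e1 \<alpha>)) p" ..
  qed
  also have "\<dots> \<in> cspanV (range (\<lambda>\<alpha>. e1 z - e1 \<alpha>))"
    by (intro fun_space.span_sum fun_space.span_scale fun_space.span_base) blast
  finally show ?thesis .
qed

lemma snd_fun_in_span:
  fixes f :: "'a::{finite,field} ppoint \<Rightarrow> complex"
  assumes "sum f UNIV = 0"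
  shows "(\<lambda>p. f (snd p)) \<in> cspanV (range (\<lambda>\<alpha>. e2 z - e2 \<alpha>))"
proof -
  have "(\<lambda>p. f (snd p)) = (\<Sum>\<alpha>\<in>UNIV. fscale (- f \<alpha>) (e2 z - e2 \<alpha>))"
  proof
    fix p :: "'a ppoint \<times> 'a ppoint"
    have "(\<Sum>\<alpha>\<in>UNIV. fscale (- f \<alpha>) (e2 z - e2 \<alpha>)) p
        = (\<Sum>\<alpha>\<in>UNIV. f \<alpha> * of_bool (snd p = \<alpha>) - of_bool (snd p = z) * f \<alpha>)"
      unfolding sum_apply by (intro sum.cong refl) (simp add: e2_def split_beta algebra_simps)
    also have "\<dots> = (\<Sum>\<alpha>\<in>UNIV. f \<alpha> * of_bool (snd p = \<alpha>)) - of_bool (snd p = z) * sum f UNIV"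
      by (simp only: sum_subtractf sum_distrib_left)
    also have "\<dots> = f (snd p)"
      using assms by simp
    finally show "f (snd p) = (\<Sum>\<alpha>\<in>UNIV. fscale (- f \<alpha>) (e2 z - e2 \<alpha>)) p" ..
  qed
  also have "\<dots> \<in> cspanV (range (\<lambda>\<alpha>. e2 z - e2 \<alpha>))"
    by (intro fun_space.span_sum fun_space.span_scale fun_space.span_base) blast
  finally show ?thesis .
qed

lemma separable_in_span:
  fixes u v :: "'a::{finite,field} ppoint \<Rightarrow> complex"
  assumes "sum u UNIV + sum v UNIV = 0"
  shows "(\<lambda>p. u (fst p) + v (snd p)) \<in> cspanV (range (\<lambda>\<alpha>. e1 z - e1 \<alpha>) \<union> range (\<lambda>\<alpha>. e2 z - e2 \<alpha>))"
proof -
  define m where "m = sum u UNIV / of_nat (card (UNIV :: 'a ppoint set))"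
  have "sum (\<lambda>c. u c - m) UNIV = 0" "sum (\<lambda>d. v d + m) UNIV = 0"
    using assms by (simp_all add: m_def sum_subtractf sum.distrib algebra_simps)
  then have "(\<lambda>p. u (fst p) - m) \<in> cspanV (range (\<lambda>\<alpha>. e1 z - e1 \<alpha>))"
    "(\<lambda>p. v (snd p) + m) \<in> cspanV (range (\<lambda>\<alpha>. e2 z - e2 \<alpha>))"
    using fst_fun_in_span[of "\<lambda>c. u c - m"] snd_fun_in_span[of "\<lambda>d. v d + m"] by simp_all
  then have "(\<lambda>p. u (fst p) - m) + (\<lambda>p. v (snd p) + m)
      \<in> cspanV (range (\<lambda>\<alpha>. e1 z - e1 \<alpha>) \<union> range (\<lambda>\<alpha>. e2 z - e2 \<alpha>))"
    by (intro fun_space.span_add) (auto intro: fun_space.span_mono[THEN subsetD])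
  then show ?thesis by (simp add: plus_fun_def)
qed

lemma pairing_e1: "(\<Sum>p\<in>UNIV. M p * e1 \<alpha> p) = (\<Sum>d\<in>UNIV. M (\<alpha>, d))"
  for M :: "'a::{finite,field} ppoint \<times> 'a ppoint \<Rightarrow> complex"
proof -
  have "(\<Sum>p\<in>UNIV. M p * e1 \<alpha> p) = (\<Sum>c\<in>UNIV. if c = \<alpha> then \<Sum>d\<in>UNIV. M (c, d) else 0)"
    unfolding sum_UNIV_pairs by (intro sum.cong refl) (simp add: e1_def)
  then show ?thesis by simp
qed

lemma pairing_e2: "(\<Sum>p\<in>UNIV. M p * e2 \<alpha> p) = (\<Sum>c\<in>UNIV. M (c, \<alpha>))"
  for M :: "'a::{finite,field} ppoint \<times> 'a ppoint \<Rightarrow> complex"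
proof -
  have "(\<Sum>p\<in>UNIV. M p * e2 \<alpha> p) = (\<Sum>c\<in>UNIV. \<Sum>d\<in>UNIV. M (c, d) * e2 \<alpha> (c, d))"
    by (rule sum_UNIV_pairs)
  also have "\<dots> = (\<Sum>d\<in>UNIV. \<Sum>c\<in>UNIV. M (c, d) * e2 \<alpha> (c, d))"
    by (rule sum.swap)
  also have "\<dots> = (\<Sum>d\<in>UNIV. if d = \<alpha> then \<Sum>c\<in>UNIV. M (c, d) else 0)"
    by (intro sum.cong refl) (simp add: e2_def)
  finally show ?thesis by simp
qed

lemma annihilator_separable:
  fixes W :: "('x::finite \<times> 'x \<Rightarrow> complex) set" and z :: 'x
  assumes x: "x \<in> annihilator W"
    and diagonal: "(\<lambda>p. of_bool (fst p = snd p)) \<in> W"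
    and tensors: "\<And>a b. a \<noteq> z \<Longrightarrow> b \<noteq> z \<Longrightarrow> diff_tensor z a b \<in> cspanV W"
  obtains u v where "sum u UNIV + sum v UNIV = 0" "x = (\<lambda>p. u (fst p) + v (snd p))"
proof -
  define u where "u c = x (c, z) - x (z, z)" for c
  define v where "v d = x (z, d)" for d
  have rectangle: "x (a, b) - x (a, z) - x (z, b) + x (z, z) = 0" if "a \<noteq> z" "b \<noteq> z" for a b
  proof -
    have "diff_tensor z a b \<in> annihilator {x}"
      using span_subset_annihilator[OF x] tensors[OF that] by blast
    then have "(\<Sum>p\<in>UNIV. diff_tensor z a b p * x p) = 0"
      by (simp add: annihilator_def mult.commute)
    then show ?thesis by (simp add: diff_tensor_pairing)
  qed
  have "x (a, b) = u a + v b" for a b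
    using rectangle[of a b] by (cases "a = z \<or> b = z") (auto simp: u_def v_def algebra_simps)
  then have separated: "x = (\<lambda>p. u (fst p) + v (snd p))" by auto
  have "(\<Sum>p\<in>UNIV. of_bool (fst p = snd p) * x p) = 0"
    using x diagonal unfolding annihilator_def by force
  then have "(\<Sum>c\<in>UNIV. x (c, c)) = 0" by (simp add: sum_UNIV_pairs)
  then have "sum u UNIV + sum v UNIV = 0"
    by (subst (asm) separated) (simp add: sum.distrib)
  then show ?thesis using that separated by blast
qed

lemma annihilator_unit_line_sums:
  fixes W :: "('a::{finite,field} ppoint \<times> 'a ppoint \<Rightarrow> complex) set" and z :: "'a ppoint"
  assumes diagonal: "(\<lambda>p. of_bool (fst p = snd p)) \<in> W"
    and rows: "\<And>M c. M \<in> W \<Longrightarrow> (\<Sum>d\<in>UNIV. M (c, d)) = 1"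
    and cols: "\<And>M d. M \<in> W \<Longrightarrow> (\<Sum>c\<in>UNIV. M (c, d)) = 1"
    and tensors: "\<And>a b. a \<noteq> z \<Longrightarrow> b \<noteq> z \<Longrightarrow> diff_tensor z a b \<in> cspanV W"
  shows "annihilator W = cspanV (range (\<lambda>\<alpha>. e1 z - e1 \<alpha>) \<union> range (\<lambda>\<alpha>. e2 z - e2 \<alpha>))"
proof
  show "annihilator W \<subseteq> cspanV (range (\<lambda>\<alpha>. e1 z - e1 \<alpha>) \<union> range (\<lambda>\<alpha>. e2 z - e2 \<alpha>))"
  proof
    fix x assume x: "x \<in> annihilator W"
    obtain u v where "sum u UNIV + sum v UNIV = 0" "x = (\<lambda>p. u (fst p) + v (snd p))"
      using annihilator_separable[OF x diagonal tensors] .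
    then show "x \<in> cspanV (range (\<lambda>\<alpha>. e1 z - e1 \<alpha>) \<union> range (\<lambda>\<alpha>. e2 z - e2 \<alpha>))"
      using separable_in_span by blast
  qed
  have "(\<Sum>p\<in>UNIV. M p * (e1 z - e1 \<alpha>) p) = 0" "(\<Sum>p\<in>UNIV. M p * (e2 z - e2 \<alpha>) p) = 0"
    if "M \<in> W" for M \<alpha>
    using rows[OF that] cols[OF that]
    by (simp_all add: right_diff_distrib sum_subtractf pairing_e1 pairing_e2)
  then show "cspanV (range (\<lambda>\<alpha>. e1 z - e1 \<alpha>) \<union> range (\<lambda>\<alpha>. e2 z - e2 \<alpha>)) \<subseteq> annihilator W"
    by (intro fun_space.span_minimal subspace_annihilator) (auto simp: annihilator_def)
qed

lemma Amat_row_sum: "(\<Sum>d\<in>UNIV. Amat g (c, d)) = 1"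
  for c :: "'a::{finite,field} ppoint"
  by (simp add: Amat_def)

lemma Amat_col_sum:
  fixes d :: "'a::{finite,field} ppoint"
  assumes "g \<in> PGL3"
  shows "(\<Sum>c\<in>UNIV. Amat g (c, d)) = 1"
proof -
  obtain c\<^sub>0 where "act g c\<^sub>0 = d" using bij_act[OF assms] by (metis bij_pointE)
  then have "Amat g (c, d) = (if c = c\<^sub>0 then 1 else 0)" for c
    using bij_act[OF assms] by (auto simp: Amat_def dest: bij_is_inj injD)
  then show ?thesis by simp
qed

lemma Amat_identity: "Amat (pgl_class (mat 1 :: 'a::field ^ 3 ^ 3)) = (\<lambda>p. of_bool (fst p = snd p))"
  by (simp add: Amat_def identity_in_PGL3(2) fun_eq_iff)

lemma weighted_row_sum:
  fixes \<alpha> \<beta> \<gamma> \<delta> :: "'a::{finite,field} ppoint"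
  shows "(\<Sum>g\<in>(PGL3 :: ('a ^ 3 ^ 3) set set). fscale (of_bool (act g \<alpha> = \<beta>)) (Amat g)) (\<gamma>, \<delta>)
    = of_nat (maps_count \<alpha> \<beta> \<gamma> \<delta>)"
  using finite_PGL3[where 'a='a]
  by (simp add: sum_apply Amat_def maps_count_def of_bool_def[symmetric] Int_def)

lemma diff_tensor_in_row_space:
  fixes z a b :: "'a::{finite,field} ppoint"
  assumes "a \<noteq> z" "b \<noteq> z"
  shows "diff_tensor z a b \<in> cspanV {Amat g | g :: ('a ^ 3 ^ 3) set. g \<in> PGL3}"
proof -
  define F where "F \<alpha> \<beta> = (\<Sum>g\<in>(PGL3 :: ('a ^ 3 ^ 3) set set). fscale (of_bool (act g \<alpha> = \<beta>)) (Amat g))"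
    for \<alpha> \<beta>
  define n\<^sub>1 where "n\<^sub>1 = maps_count z z z z"
  define n\<^sub>2 where "n\<^sub>2 = maps_count z z a a"
  have counts: "maps_count \<alpha> \<beta> \<gamma> \<delta> =
      (if \<alpha> = \<gamma> then (if \<beta> = \<delta> then n\<^sub>1 else 0) else (if \<beta> = \<delta> then 0 else n\<^sub>2))"
    for \<alpha> \<beta> \<gamma> \<delta> :: "'a ppoint"
    unfolding n\<^sub>1_def n\<^sub>2_def by (rule maps_count_cases[OF assms(1)])
  define k :: complex where "k = of_nat (n\<^sub>1 + n\<^sub>2)"
  have "k \<noteq> 0" unfolding k_def n\<^sub>1_def using maps_count_pos[of z] by (simp only: of_nat_eq_0_iff)
  have F_span: "F \<alpha> \<beta> \<in> cspanV {Amat g | g :: ('a ^ 3 ^ 3) set. g \<in> PGL3}" for \<alpha> \<beta>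
    unfolding F_def by (intro fun_space.span_sum fun_space.span_scale fun_space.span_base) blast
  (* F \<alpha> \<beta> sums the rows A_g over the g mapping \<alpha> to \<beta>; as its entries only depend on which
     coordinates coincide, the alternating sum collapses onto the tensor. *)
  have "F a b - F a z - F z b + F z z = fscale k (diff_tensor z a b)"
  proof
    fix p :: "'a ppoint \<times> 'a ppoint"
    obtain c d where "p = (c, d)" by (cases p)
    then show "(F a b - F a z - F z b + F z z) p = k * diff_tensor z a b p"
      using assms unfolding F_def
      by (cases "c = a"; cases "c = z"; cases "d = b"; cases "d = z")
        (simp_all add: weighted_row_sum counts diff_tensor_def k_def)
  qed
  then have "diff_tensor z a b = fscale (inverse k) (F a b - F a z - F z b + F z z)"
    using \<open>k \<noteq> 0\<close> by (simp add: fun_eq_iff)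
  also have "\<dots> \<in> cspanV {Amat g | g :: ('a ^ 3 ^ 3) set. g \<in> PGL3}"
    by (intro fun_space.span_scale fun_space.span_add fun_space.span_diff F_span)
  finally show ?thesis .
qed

theorem mainTheorem4:
  fixes abar :: "'a::{finite,field} ppoint"
  shows "A_rank TYPE('a) = (card (UNIV :: 'a ppoint set) - 1)^2 + 1
    \<and> A_kernel TYPE('a) =
        cspanV ((\<lambda>\<alpha>. e1 abar - e1 \<alpha>) ` UNIV \<union> (\<lambda>\<alpha>. e2 abar - e2 \<alpha>) ` UNIV)"
proof -
  define W where "W = {Amat g | g :: ('a ^ 3 ^ 3) set. g \<in> PGL3}"
  have "Amat (pgl_class (mat 1 :: 'a ^ 3 ^ 3)) \<in> W"
    unfolding W_def using identity_in_PGL3(1) by blast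
  then have diagonal: "(\<lambda>p. of_bool (fst p = snd p)) \<in> W"
    by (simp only: Amat_identity)
  have rows: "\<And>M c. M \<in> W \<Longrightarrow> (\<Sum>d\<in>UNIV. M (c, d)) = 1"
    unfolding W_def using Amat_row_sum by auto
  have cols: "\<And>M d. M \<in> W \<Longrightarrow> (\<Sum>c\<in>UNIV. M (c, d)) = 1"
    unfolding W_def using Amat_col_sum by auto
  have tensors: "\<And>a b. a \<noteq> abar \<Longrightarrow> b \<noteq> abar \<Longrightarrow> diff_tensor abar a b \<in> cspanV W"
    unfolding W_def by (rule diff_tensor_in_row_space)
  have "A_rank TYPE('a) = (card (UNIV :: 'a ppoint set) - 1)^2 + 1"
    unfolding A_rank_def W_def[symmetric] using diagonal rows cols tensors by (rule dim_unit_line_sums)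
  moreover have "A_kernel TYPE('a) = annihilator W"
    unfolding A_kernel_def annihilator_def W_def by auto
  ultimately show ?thesis
    using annihilator_unit_line_sums[OF diagonal rows cols tensors] by simp
qed

end
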